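(* Let $\varepsilon\in[0,1)$ and $\mathcal{P},\mathcal{E}\subseteq\mathcal{D}(P)$. (a) If $\mathcal{B}_\varepsilon(\mathcal{P})\cap\mathcal{E}\neq\emptyset$, then $\beta\overline{C}_{\mathrm{TO},\varepsilon}(\mathcal{P},\mathcal{E})=0$, and this zero cost is achieved by a thermal operation of the form $\mathcal{F}(\cdot)=\operatorname{tr}[\cdot]\,\tau$ for a suitable $\tau\in\mathcal{E}$ (discarding the input and preparing $\tau$). (b) If $T(\mathcal{P},\mathcal{E})>\varepsilon$, then $$\beta\overline{C}_{\mathrm{GPL},\varepsilon}(\mathcal{P},\mathcal{E})\ge\log\frac{T(\mathcal{P},\mathcal{E})-\varepsilon}{\operatorname{diam}(\mathcal{E})},$$ with the conventions that $\operatorname{diam}(\mathcal{E})=0$ when $\mathcal{E}$ is a singleton (so the right side is $\log\infty=\infty$).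
   Context: All Hilbert spaces are finite-dimensional; $\mathcal{D}(P)$ is the set of density operators on $P$; $T(X,Y)=\tfrac12\|X-Y\|_1$; $\mathcal{B}_\varepsilon(\mathcal{P})=\{\omega\in\mathcal{D}:T(\omega,\rho)\le\varepsilon\text{ for some }\rho\in\mathcal{P}\}$; $T(\mathcal{P},\mathcal{E})=\inf_{\rho\in\mathcal{P},\tau\in\mathcal{E}}T(\rho,\tau)$; $\operatorname{diam}(\mathcal{E})=\sup_{\tau,\tau'\in\mathcal{E}}T(\tau,\tau')$. Battery: qubit $B$ with basis $\{|0\rangle,|1\rangle\}$, $\pi_M=(1-\tfrac1M)|0\rangle\langle0|+\tfrac1M|1\rangle\langle1|$ for $M>1$, $\Pi_M=\{\pi_{M'}:M'\in[M,\infty)\}$. The one-shot work cost from a dirty battery under a class $\mathfrak{F}$ is $\beta\overline{C}_{\mathfrak{F},\varepsilon}(\mathcal{P},\mathcal{E})=\log\inf\{M>1:\exists\mathcal{F}\in\mathfrak{F}\text{ with }T(\mathcal{F}(|1\rangle\langle1|),\rho)\le\varepsilon\text{ for some }\rho\in\mathcal{P}\text{ and }\mathcal{F}(\sigma)\in\mathcal{E}\ \forall\sigma\in\Pi_M\}$ (with $\log\inf\emptyset=+\infty$). GPL is the class of all linear maps (Gibbs preservation being the condition $\mathcal{F}(\Pi_M)\subseteq\mathcal{E}$); TO is the class of thermal operations, i.e. maps $\rho\mapsto\operatorname{tr}_{\text{rest}}[U(\rho\otimes\tau^E)U^\dagger]$ with $\tau^E$ an ancilla Gibbs state and $U$ energy-conserving;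 replacer maps $\operatorname{tr}[\cdot]\tau$ are thermal operations (taking an ancilla with Gibbs state $\tau$ and $U=I$). *)

theory Defs
  imports "Jordan_Normal_Form.Schur_Decomposition" "HOL-Library.Extended_Real"
begin

text \<open>States and operators on the system P (of dimension d) and on the battery qubit B are
  complex matrices (Jordan_Normal_Form).  Channels/maps are functions on matrices.\<close>

definition psd_mat :: "nat \<Rightarrow> complex mat \<Rightarrow> bool" where
  "psd_mat d A \<longleftrightarrow> A \<in> carrier_mat d d \<and>
     (\<forall>v \<in> carrier_vec d. Im (conjugate v \<bullet> (A *\<^sub>v v)) = 0 \<and> 0 \<le> Re (conjugate v \<bullet> (A *\<^sub>v v)))"

definition mtrace :: "complex mat \<Rightarrow> complex" where
  "mtrace A = (\<Sum>i < dim_row A. A $$ (i, i))"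

definition density_ops :: "nat \<Rightarrow> complex mat set" where
  "density_ops d = {A. psd_mat d A \<and> mtrace A = 1}"

text \<open>Trace norm: sum of the singular values of X, i.e. the sum of the square roots of the
  eigenvalues (counted with algebraic multiplicity) of X^dagger X.\<close>
definition trace_norm :: "complex mat \<Rightarrow> real" where
  "trace_norm X = (let p = char_poly (mat_adjoint X * X) in
     (\<Sum>z \<in> {z. poly p z = 0}. real (order z p) * sqrt (Re z)))"

definition tdist :: "complex mat \<Rightarrow> complex mat \<Rightarrow> real" where
  "tdist X Y = trace_norm (X - Y) / 2"

definition eps_ball :: "nat \<Rightarrow> real \<Rightarrow> complex mat set \<Rightarrow> complex mat set" where
  "eps_ball d \<epsilon> \<P> = {\<omega> \<in> density_ops d. \<exists>\<rho>\<in>\<P>. tdist \<omega> \<rho> \<le> \<epsilon>}"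

definition tdist_sets :: "complex mat set \<Rightarrow> complex mat set \<Rightarrow> real" where
  "tdist_sets \<P> \<E> = Inf {tdist \<rho> \<tau> | \<rho> \<tau>. \<rho> \<in> \<P> \<and> \<tau> \<in> \<E>}"

definition diam :: "complex mat set \<Rightarrow> real" where
  "diam \<E> = Sup {tdist \<tau> \<tau>' | \<tau> \<tau>'. \<tau> \<in> \<E> \<and> \<tau>' \<in> \<E>}"

definition ket1_proj :: "complex mat" where
  "ket1_proj = mat 2 2 (\<lambda>(i,j). if i = 1 \<and> j = 1 then 1 else 0)"

definition batt_pi :: "real \<Rightarrow> complex mat" where
  "batt_pi M = mat 2 2 (\<lambda>(i,j). if i = 0 \<and> j = 0 then complex_of_real (1 - 1/M)
                               else if i = 1 \<and> j = 1 then complex_of_real (1/M) else 0)"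

definition batt_Pi :: "real \<Rightarrow> complex mat set" where
  "batt_Pi M = {batt_pi M' | M'. M' \<ge> M}"

definition GPL :: "nat \<Rightarrow> (complex mat \<Rightarrow> complex mat) set" where
  "GPL d = {F. (\<forall>A \<in> carrier_mat 2 2. F A \<in> carrier_mat d d) \<and>
     (\<forall>A \<in> carrier_mat 2 2. \<forall>B \<in> carrier_mat 2 2. F (A + B) = F A + F B) \<and>
     (\<forall>A \<in> carrier_mat 2 2. \<forall>c. F (c \<cdot>\<^sub>m A) = c \<cdot>\<^sub>m F A)}"

definition replacer :: "complex mat \<Rightarrow> complex mat \<Rightarrow> complex mat" where
  "replacer \<tau> = (\<lambda>X. mtrace X \<cdot>\<^sub>m \<tau>)"

definition feasible ::
  "(complex mat \<Rightarrow> complex mat) \<Rightarrow> real \<Rightarrow> complex mat set \<Rightarrow> complex mat set \<Rightarrow> real \<Rightarrow> bool" where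
  "feasible F \<epsilon> \<P> \<E> M \<longleftrightarrow>
     (\<exists>\<rho>\<in>\<P>. tdist (F ket1_proj) \<rho> \<le> \<epsilon>) \<and> (\<forall>\<sigma> \<in> batt_Pi M. F \<sigma> \<in> \<E>)"

text \<open>beta * C-bar_{F,eps}(P,E) = log inf {M > 1. ...}, with log inf {} = +infinity.\<close>
definition work_cost ::
  "(complex mat \<Rightarrow> complex mat) set \<Rightarrow> real \<Rightarrow> complex mat set \<Rightarrow> complex mat set \<Rightarrow> ereal" where
  "work_cost \<FF> \<epsilon> \<P> \<E> =
     (let S = {M. M > 1 \<and> (\<exists>F \<in> \<FF>. feasible F \<epsilon> \<P> \<E> M)} in
      if S = {} then \<infinity> else ereal (ln (Inf S)))"

end

theory Submission
  imports Defs
begin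

text \<open>
  (a) If some \<tau> \<in> \<E> lies within \<epsilon> of \<P>, the replacer map onto \<tau> is feasible for every
  battery parameter M > 1, so the infimum in the work cost is 1 and the cost is ln 1 = 0.

  (b) On the battery, |1><1| = (1 + M) \<pi>(M) - M \<pi>(M^2). For a linear F feasible at M, the
  states \<tau>1 = F \<pi>(M) and \<tau>2 = F \<pi>(M^2) lie in \<E> and F |1><1| - \<tau>1 = M (\<tau>1 - \<tau>2).
  Taking \<rho> \<in> \<P> that is \<epsilon>-close to F |1><1|, the triangle inequality gives
  T(\<P>,\<E>) \<le> T(\<rho>,\<tau>1) \<le> \<epsilon> + M T(\<tau>1,\<tau>2) \<le> \<epsilon> + M diam(\<E>). So every feasible M is
  at least (T(\<P>,\<E>) - \<epsilon>) / diam(\<E>), and there is none at all when diam(\<E>) = 0.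

  The metric properties of the trace distance come from the spectral theorem: for
  A = U diag(l) U* the trace norm is \<Sum>i |l i|, and for every unitary V the diagonal of
  V* A V has l1-norm at most \<Sum>i |l i|. Diagonalising X + Y by V then yields the
  triangle inequality.
\<close>

section \<open>Adjoints, Hermitian and unitary matrices\<close>

definition hermitian :: "nat \<Rightarrow> complex mat \<Rightarrow> bool" where
  "hermitian n A \<longleftrightarrow> A \<in> carrier_mat n n \<and> mat_adjoint A = A"

definition unitary :: "nat \<Rightarrow> complex mat \<Rightarrow> bool" where
  "unitary n U \<longleftrightarrow> U \<in> carrier_mat n n \<and> mat_adjoint U * U = 1\<^sub>m n \<and> U * mat_adjoint U = 1\<^sub>m n"

definition real_diag_mat :: "nat \<Rightarrow> (nat \<Rightarrow> real) \<Rightarrow> complex mat" where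
  "real_diag_mat n l = mat n n (\<lambda>(i,j). if i = j then complex_of_real (l i) else 0)"

lemma dim_mat_adjoint [simp]:
  "dim_row (mat_adjoint A) = dim_col A" "dim_col (mat_adjoint A) = dim_row A"
  unfolding mat_adjoint_def by simp_all

lemma mat_adjoint_carrier [simp]: "A \<in> carrier_mat n m \<Longrightarrow> mat_adjoint A \<in> carrier_mat m n"
  unfolding carrier_mat_def by simp

lemma index_mat_adjoint [simp]:
  fixes A :: "complex mat"
  shows "i < dim_col A \<Longrightarrow> j < dim_row A \<Longrightarrow> mat_adjoint A $$ (i,j) = cnj (A $$ (j,i))"
  unfolding mat_adjoint_def by (simp add: mat_of_rows_index)

lemma row_mat_adjoint: "i < dim_col A \<Longrightarrow> row (mat_adjoint A) i = conjugate (col A i)"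
  unfolding mat_adjoint_def by (simp add: mat_of_rows_row)

lemma mat_adjoint_mat_adjoint [simp]:
  fixes A :: "complex mat"
  shows "mat_adjoint (mat_adjoint A) = A"
  by (rule eq_matI) simp_all

lemma index_mult_mat_sum:
  assumes "A \<in> carrier_mat n m" "B \<in> carrier_mat m k" "i < n" "j < k"
  shows "(A * B) $$ (i,j) = (\<Sum>l<m. A $$ (i,l) * B $$ (l,j))"
  using assms by (simp add: scalar_prod_def atLeast0LessThan)

lemma mat_adjoint_mult:
  fixes A B :: "complex mat"
  assumes A: "A \<in> carrier_mat n m" and B: "B \<in> carrier_mat m k"
  shows "mat_adjoint (A * B) = mat_adjoint B * mat_adjoint A"
proof (rule eq_matI)
  fix i j
  assume "i < dim_row (mat_adjoint B * mat_adjoint A)" "j < dim_col (mat_adjoint B * mat_adjoint A)"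
  then have i: "i < k" and j: "j < n"
    using A B by auto
  have "mat_adjoint (A * B) $$ (i,j) = cnj (\<Sum>l<m. A $$ (j,l) * B $$ (l,i))"
    using A B i j by (simp add: index_mult_mat_sum[OF A B j i])
  also have "\<dots> = (\<Sum>l<m. mat_adjoint B $$ (i,l) * mat_adjoint A $$ (l,j))"
    using A B i j by (simp add: cnj_sum mult.commute)
  also have "\<dots> = (mat_adjoint B * mat_adjoint A) $$ (i,j)"
    by (rule index_mult_mat_sum[symmetric]) (use A B i j in auto)
  finally show "mat_adjoint (A * B) $$ (i,j) = (mat_adjoint B * mat_adjoint A) $$ (i,j)" .
qed (use A B in auto)

lemma mat_adjoint_add:
  fixes A B :: "complex mat"
  assumes "A \<in> carrier_mat n m" "B \<in> carrier_mat n m"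
  shows "mat_adjoint (A + B) = mat_adjoint A + mat_adjoint B"
  by (rule eq_matI) (use assms in auto)

lemma mat_adjoint_smult_real:
  fixes A :: "complex mat"
  shows "mat_adjoint (complex_of_real c \<cdot>\<^sub>m A) = complex_of_real c \<cdot>\<^sub>m mat_adjoint A"
  by (rule eq_matI) auto

lemma assoc_mult_mat':
  fixes A B C :: "'a::semiring_0 mat"
  assumes "dim_col A = dim_row B" "dim_col B = dim_row C"
  shows "A * B * C = A * (B * C)"
  by (rule assoc_mult_mat[of A _ _ B _ C]) (use assms in auto)

lemma hermitian_index: "hermitian n A \<Longrightarrow> i < n \<Longrightarrow> j < n \<Longrightarrow> A $$ (i,j) = cnj (A $$ (j,i))"
  unfolding hermitian_def by (metis carrier_matD index_mat_adjoint)

lemma hermitian_add: "hermitian n X \<Longrightarrow> hermitian n Y \<Longrightarrow> hermitian n (X + Y)"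
  unfolding hermitian_def by (auto simp: mat_adjoint_add)

lemma hermitian_smult_real: "hermitian n X \<Longrightarrow> hermitian n (complex_of_real c \<cdot>\<^sub>m X)"
  unfolding hermitian_def by (auto simp: mat_adjoint_smult_real)

lemma minus_eq_add_smult_real:
  fixes X Y :: "complex mat"
  assumes "X \<in> carrier_mat n n" "Y \<in> carrier_mat n n"
  shows "X - Y = X + complex_of_real (-1) \<cdot>\<^sub>m Y"
  by (rule eq_matI) (use assms in auto)

lemma hermitian_diff: "hermitian n X \<Longrightarrow> hermitian n Y \<Longrightarrow> hermitian n (X - Y)"
  using minus_eq_add_smult_real[of X n Y] hermitian_add hermitian_smult_real
  unfolding hermitian_def by metis

lemma unitaryD:
  assumes "unitary n U"
  shows "U \<in> carrier_mat n n" "mat_adjoint U \<in> carrier_mat n n"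
    "mat_adjoint U * U = 1\<^sub>m n" "U * mat_adjoint U = 1\<^sub>m n"
  using assms unfolding unitary_def by auto

lemma unitaryI:
  assumes "U \<in> carrier_mat n n" "mat_adjoint U * U = 1\<^sub>m n"
  shows "unitary n U"
  using assms mat_mult_left_right_inverse[of "mat_adjoint U" n U] unfolding unitary_def by auto

lemma unitary_adjoint: "unitary n U \<Longrightarrow> unitary n (mat_adjoint U)"
  unfolding unitary_def by auto

lemma unitary_cancel_left:
  assumes U: "unitary n U" and X: "X \<in> carrier_mat n k"
  shows "mat_adjoint U * (U * X) = X"
  using unitaryD[OF U] X by (simp flip: assoc_mult_mat[of "mat_adjoint U" n n U n X k])

lemma unitary_mult:
  assumes U: "unitary n U" and V: "unitary n V"
  shows "unitary n (U * V)"
proof (rule unitaryI)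
  note U' = unitaryD[OF U] and V' = unitaryD[OF V]
  show "U * V \<in> carrier_mat n n"
    using U' V' by simp
  have "mat_adjoint (U * V) * (U * V) = mat_adjoint V * (mat_adjoint U * (U * V))"
    using U' V' by (simp add: mat_adjoint_mult[of U n n V n] assoc_mult_mat[of _ n n _ n _ n])
  also have "\<dots> = 1\<^sub>m n"
    using V' by (simp add: unitary_cancel_left[OF U])
  finally show "mat_adjoint (U * V) * (U * V) = 1\<^sub>m n" .
qed

lemma unitary_conj_cancel:
  assumes V: "unitary n V" and D: "D \<in> carrier_mat n n"
  shows "mat_adjoint V * (V * D * mat_adjoint V) * V = D"
proof -
  note V' = unitaryD[OF V]
  have "mat_adjoint V * (V * D * mat_adjoint V) * V = mat_adjoint V * (V * (D * (mat_adjoint V * V)))"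
    using V' D by (simp add: assoc_mult_mat')
  also have "\<dots> = D"
    using V' D by (simp add: unitary_cancel_left[OF V])
  finally show ?thesis .
qed

lemma real_diag_mat_carrier [simp]: "real_diag_mat n l \<in> carrier_mat n n"
  and dim_real_diag_mat [simp]: "dim_row (real_diag_mat n l) = n" "dim_col (real_diag_mat n l) = n"
  unfolding real_diag_mat_def by auto

lemma index_real_diag_mat [simp]:
  "i < n \<Longrightarrow> j < n \<Longrightarrow> real_diag_mat n l $$ (i,j) = (if i = j then complex_of_real (l i) else 0)"
  unfolding real_diag_mat_def by auto

lemma mat_adjoint_real_diag_mat [simp]: "mat_adjoint (real_diag_mat n l) = real_diag_mat n l"
  by (rule eq_matI) auto

lemma sum_mult_delta:
  fixes f :: "nat \<Rightarrow> 'a::semiring_0"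
  assumes "k < n"
  shows "(\<Sum>m<n. f m * (if m = k then x else 0)) = f k * x"
  using assms by (simp add: if_distrib[of "(*) _"] cong: if_cong)

lemma sum_delta_mult:
  fixes f :: "nat \<Rightarrow> 'a::semiring_0"
  assumes "k < n"
  shows "(\<Sum>m<n. (if m = k then x else 0) * f m) = x * f k"
  using assms by (simp add: if_distrib[of "\<lambda>y. y * _"] cong: if_cong)

lemma real_diag_mat_mult: "real_diag_mat n l * real_diag_mat n l' = real_diag_mat n (\<lambda>i. l i * l' i)"
proof (rule eq_matI)
  fix i j
  assume "i < dim_row (real_diag_mat n (\<lambda>i. l i * l' i))" "j < dim_col (real_diag_mat n (\<lambda>i. l i * l' i))"
  then have i: "i < n" and j: "j < n"
    by auto
  have "(real_diag_mat n l * real_diag_mat n l') $$ (i,j)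
      = (\<Sum>k<n. real_diag_mat n l $$ (i,k) * (if k = j then complex_of_real (l' j) else 0))"
    using i j by (subst index_mult_mat_sum[of _ n n _ n]) (auto intro!: sum.cong)
  then show "(real_diag_mat n l * real_diag_mat n l') $$ (i,j) = real_diag_mat n (\<lambda>i. l i * l' i) $$ (i,j)"
    using i j by (simp add: sum_mult_delta)
qed auto

lemma index_unitary_similar:
  assumes U: "U \<in> carrier_mat n n" and i: "i < n" and j: "j < n"
  shows "(U * real_diag_mat n l * mat_adjoint U) $$ (i,j)
    = (\<Sum>k<n. U $$ (i,k) * complex_of_real (l k) * cnj (U $$ (j,k)))"
proof -
  have UD: "(U * real_diag_mat n l) $$ (i,k) = U $$ (i,k) * complex_of_real (l k)" if k: "k < n" for k
  proof -
    have "(U * real_diag_mat n l) $$ (i,k) = (\<Sum>m<n. U $$ (i,m) * (if m = k then complex_of_real (l k) else 0))"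
      using U i k by (subst index_mult_mat_sum[of _ n n _ n]) (auto intro!: sum.cong)
    then show ?thesis
      using k by (simp add: sum_mult_delta)
  qed
  have "(U * real_diag_mat n l * mat_adjoint U) $$ (i,j)
      = (\<Sum>k<n. (U * real_diag_mat n l) $$ (i,k) * mat_adjoint U $$ (k,j))"
    by (rule index_mult_mat_sum) (use U i j in auto)
  then show ?thesis
    using U j by (auto simp: UD simp del: index_mult_mat intro!: sum.cong)
qed

section \<open>The spectral theorem for Hermitian matrices\<close>

lemma complex_mat_eigenvector:
  fixes A :: "complex mat"
  assumes A: "A \<in> carrier_mat n n" and n: "0 < n"
  obtains v e where "v \<in> carrier_vec n" "v \<noteq> 0\<^sub>v n" "A *\<^sub>v v = e \<cdot>\<^sub>v v"
proof -
  obtain as where cp: "char_poly A = (\<Prod>a\<leftarrow>as. [:-a,1:])" and len: "length as = n"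
    using char_poly_factorized[OF A] by blast
  obtain e where "e \<in> set as"
    using len n by (cases as) auto
  then have "eigenvalue A e"
    unfolding eigenvalue_root_char_poly[OF A] cp by (rule linear_poly_root)
  from find_eigenvector[OF A this] show ?thesis
    using that A unfolding eigenvector_def by auto
qed

lemma unitary_normalize_corthogonal:
  assumes ws: "set ws \<subseteq> carrier_vec n" "length ws = n" and orth: "corthogonal ws"
  obtains W c where "unitary n W" "\<And>j. j < n \<Longrightarrow> col W j = c j \<cdot>\<^sub>v ws ! j"
proof -
  have wsj: "ws ! j \<in> carrier_vec n" if "j < n" for j
    using ws that by auto
  define c where "c j = sqrt (Re (ws ! j \<bullet>c ws ! j))" for j
  have norm: "ws ! j \<bullet>c ws ! j = complex_of_real (c j * c j)" and c0: "c j \<noteq> 0" if j: "j < n" for j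
  proof -
    have "ws ! j \<bullet>c ws ! j \<noteq> 0"
      using corthogonalD[OF orth, of j j] j ws by simp
    then have "ws ! j \<bullet>c ws ! j > 0"
      using conjugate_square_ge_0_vec[of "ws ! j"] by order
    then show "ws ! j \<bullet>c ws ! j = complex_of_real (c j * c j)" "c j \<noteq> 0"
      unfolding c_def by (auto simp: less_complex_def complex_eq_iff)
  qed
  define W where "W = mat n n (\<lambda>(i,j). ws ! j $ i / complex_of_real (c j))"
  have colW: "col W j = complex_of_real (1 / c j) \<cdot>\<^sub>v ws ! j" if "j < n" for j
    using wsj[OF that] that unfolding W_def by (auto simp: divide_inverse mult.commute)
  have W: "W \<in> carrier_mat n n"
    unfolding W_def by simp
  have "mat_adjoint W * W = 1\<^sub>m n"
  proof (rule eq_matI)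
    fix j k
    assume "j < dim_row (1\<^sub>m n)" "k < dim_col (1\<^sub>m n)"
    then have j: "j < n" and k: "k < n"
      by auto
    have "(mat_adjoint W * W) $$ (j,k) = conjugate (col W j) \<bullet> col W k"
      using W j k by (simp add: row_mat_adjoint)
    also have "\<dots> = complex_of_real (1 / (c j * c k)) * (ws ! k \<bullet>c ws ! j)"
      using wsj[OF j] wsj[OF k]
      by (simp add: colW j k conjugate_smult_vec conjugate_vec_sprod_comm[of "ws ! k" n "ws ! j"])
    also have "\<dots> = 1\<^sub>m n $$ (j,k)"
      using corthogonalD[OF orth, of k j] j k ws norm[OF j] c0[OF j] by auto
    finally show "(mat_adjoint W * W) $$ (j,k) = 1\<^sub>m n $$ (j,k)" .
  qed (use W in auto)
  then show ?thesis
    by (rule that[OF unitaryI[OF W]]) (rule colW)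
qed

lemma unitary_first_col:
  assumes v: "v \<in> carrier_vec n" and v0: "v \<noteq> 0\<^sub>v n"
  obtains W c where "unitary n W" "col W 0 = c \<cdot>\<^sub>v v"
proof -
  interpret cof_vec_space n "TYPE(complex)" .
  define ws where "ws = gram_schmidt n (basis_completion v)"
  from basis_completion[OF v v0] gram_schmidt_result[OF _ _ _ ws_def]
  have ws: "set ws \<subseteq> carrier_vec n" "length ws = n" and orth: "corthogonal ws"
    by auto
  have n: "0 < n"
    using v v0 by (cases n) auto
  obtain vs where "basis_completion v = v # vs"
    using basis_completion[OF v v0] n by (cases "basis_completion v") auto
  then have "hd ws = v"
    unfolding ws_def using gram_schmidt_hd[OF v] by simp
  then have ws0: "ws ! 0 = v"
    using ws n by (metis hd_conv_nth list.size(3) not_less_zero)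
  obtain W c where W: "unitary n W" and col: "\<And>j. j < n \<Longrightarrow> col W j = c j \<cdot>\<^sub>v ws ! j"
    using unitary_normalize_corthogonal[OF ws orth] by blast
  show ?thesis
    using that[OF W] col[OF n] ws0 by simp
qed

lemma hermitian_conj:
  assumes A: "hermitian n A" and W: "W \<in> carrier_mat n n"
  shows "hermitian n (mat_adjoint W * A * W)"
proof -
  have A': "A \<in> carrier_mat n n" "mat_adjoint A = A"
    using A unfolding hermitian_def by auto
  have "mat_adjoint W * A * W \<in> carrier_mat n n"
    using A' W by (metis mat_adjoint_carrier mult_carrier_mat)
  moreover have "mat_adjoint (mat_adjoint W * A * W) = mat_adjoint W * mat_adjoint (mat_adjoint W * A)"
    by (rule mat_adjoint_mult[of _ n n W n]) (use A' W in auto)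
  moreover have "\<dots> = mat_adjoint W * A * W"
    using A' W by (simp add: mat_adjoint_mult[of _ n n A n] assoc_mult_mat')
  ultimately show ?thesis
    unfolding hermitian_def by simp
qed

lemma unitary_conj_eigen_col:
  assumes A: "A \<in> carrier_mat n n" and W: "unitary n W"
    and Av: "A *\<^sub>v col W 0 = e \<cdot>\<^sub>v col W 0" and i: "i < n"
  shows "(mat_adjoint W * A * W) $$ (i,0) = (if i = 0 then e else 0)"
proof -
  note W' = unitaryD[OF W]
  have "(mat_adjoint W * A * W) $$ (i,0) = row (mat_adjoint W) i \<bullet> (A *\<^sub>v col W 0)"
    using A W' i by (simp add: assoc_mult_mat' mult_mat_vec_def)
  also have "\<dots> = e * (mat_adjoint W * W) $$ (i,0)"
    using W'(1) i by (simp add: Av)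
  finally show ?thesis
    using i W'(3) by simp
qed

lemma hermitian_deflation:
  assumes A: "hermitian (Suc m) A"
  obtains W a where "unitary (Suc m) W" "hermitian (Suc m) (mat_adjoint W * A * W)"
    "\<And>i. i < Suc m \<Longrightarrow> (mat_adjoint W * A * W) $$ (i,0) = (if i = 0 then complex_of_real a else 0)"
proof -
  have A_carrier: "A \<in> carrier_mat (Suc m) (Suc m)"
    using A unfolding hermitian_def by simp
  obtain v e where v: "v \<in> carrier_vec (Suc m)" "v \<noteq> 0\<^sub>v (Suc m)" and Av: "A *\<^sub>v v = e \<cdot>\<^sub>v v"
    using complex_mat_eigenvector[OF A_carrier] by blast
  obtain W c where W: "unitary (Suc m) W" and Wv: "col W 0 = c \<cdot>\<^sub>v v"
    using unitary_first_col[OF v] by blast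
  have "A *\<^sub>v col W 0 = e \<cdot>\<^sub>v col W 0"
    using A_carrier v by (simp add: Wv Av mult_mat_vec smult_smult_assoc mult.commute)
  then have col0: "(mat_adjoint W * A * W) $$ (i,0) = (if i = 0 then e else 0)" if "i < Suc m" for i
    using unitary_conj_eigen_col[OF A_carrier W _ that] by simp
  have A': "hermitian (Suc m) (mat_adjoint W * A * W)"
    using hermitian_conj[OF A unitaryD(1)[OF W]] .
  have "(mat_adjoint W * A * W) $$ (0,0) = cnj ((mat_adjoint W * A * W) $$ (0,0))"
    by (rule hermitian_index[OF A']) simp_all
  then have "cnj e = e"
    using col0[of 0] by simp
  then have "complex_of_real (Re e) = e"
    by (simp add: complex_eq_iff)
  then show ?thesis
    using that[OF W A', of "Re e"] col0 by simp
qed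

lemma hermitian_lower_block:
  assumes A: "hermitian (Suc m) A"
  shows "hermitian m (mat m m (\<lambda>(i,j). A $$ (Suc i, Suc j)))"
  unfolding hermitian_def
  by (auto intro!: eq_matI intro: hermitian_index[OF A, symmetric])

definition one_direct_sum :: "complex mat \<Rightarrow> complex mat" where
  "one_direct_sum U = mat (Suc (dim_row U)) (Suc (dim_col U))
     (\<lambda>(i,j). case (i,j) of (0,0) \<Rightarrow> 1 | (Suc i', Suc j') \<Rightarrow> U $$ (i',j') | _ \<Rightarrow> 0)"

lemma dim_one_direct_sum [simp]:
  "dim_row (one_direct_sum U) = Suc (dim_row U)" "dim_col (one_direct_sum U) = Suc (dim_col U)"
  unfolding one_direct_sum_def by auto

lemma one_direct_sum_carrier [simp]:
  "U \<in> carrier_mat m m \<Longrightarrow> one_direct_sum U \<in> carrier_mat (Suc m) (Suc m)"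
  unfolding one_direct_sum_def by auto

lemma index_one_direct_sum [simp]:
  assumes "U \<in> carrier_mat m m"
  shows "one_direct_sum U $$ (0,0) = 1"
    and "j < m \<Longrightarrow> one_direct_sum U $$ (0, Suc j) = 0"
    and "i < m \<Longrightarrow> one_direct_sum U $$ (Suc i, 0) = 0"
    and "i < m \<Longrightarrow> j < m \<Longrightarrow> one_direct_sum U $$ (Suc i, Suc j) = U $$ (i,j)"
  using assms unfolding one_direct_sum_def by auto

lemma unitary_one_direct_sum:
  assumes U: "unitary m U"
  shows "unitary (Suc m) (one_direct_sum U)"
proof (rule unitaryI)
  let ?E = "one_direct_sum U"
  note U' = unitaryD[OF U]
  show E: "?E \<in> carrier_mat (Suc m) (Suc m)"
    using U' by simp
  show "mat_adjoint ?E * ?E = 1\<^sub>m (Suc m)"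
  proof (rule eq_matI)
    fix i j
    assume "i < dim_row (1\<^sub>m (Suc m))" "j < dim_col (1\<^sub>m (Suc m))"
    then have i: "i < Suc m" and j: "j < Suc m"
      by auto
    have "(mat_adjoint ?E * ?E) $$ (i,j) = (\<Sum>k<Suc m. cnj (?E $$ (k,i)) * ?E $$ (k,j))"
      using E U'(1) i j by (subst index_mult_mat_sum[of _ "Suc m" "Suc m" _ "Suc m"]) (auto intro!: sum.cong)
    also have "\<dots> = cnj (?E $$ (0,i)) * ?E $$ (0,j) + (\<Sum>k<m. cnj (?E $$ (Suc k,i)) * ?E $$ (Suc k,j))"
      by (rule sum.lessThan_Suc_shift)
    also have "\<dots> = 1\<^sub>m (Suc m) $$ (i,j)"
    proof (cases i; cases j)
      fix i' j'
      assume ij: "i = Suc i'" "j = Suc j'"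
      then have "(\<Sum>k<m. cnj (?E $$ (Suc k,i)) * ?E $$ (Suc k,j)) = (mat_adjoint U * U) $$ (i',j')"
        using U'(1) i j by (simp add: index_mult_mat_sum[of _ m m _ m] del: index_mult_mat)
      then show ?thesis
        using U' i j ij by simp
    qed (use U' i j in auto)
    finally show "(mat_adjoint ?E * ?E) $$ (i,j) = 1\<^sub>m (Suc m) $$ (i,j)" .
  qed (use E in auto)
qed

lemma one_direct_sum_similar:
  assumes U: "U \<in> carrier_mat m m" and A: "hermitian (Suc m) A"
    and col0: "\<And>i. i < Suc m \<Longrightarrow> A $$ (i,0) = (if i = 0 then complex_of_real a else 0)"
    and lower: "mat m m (\<lambda>(i,j). A $$ (Suc i, Suc j)) = U * real_diag_mat m l * mat_adjoint U"
  shows "A = one_direct_sum U * real_diag_mat (Suc m) (case_nat a l) * mat_adjoint (one_direct_sum U)"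
proof (rule eq_matI)
  let ?E = "one_direct_sum U"
  have E: "?E \<in> carrier_mat (Suc m) (Suc m)"
    using U by simp
  fix i j
  assume "i < dim_row (?E * real_diag_mat (Suc m) (case_nat a l) * mat_adjoint ?E)"
    "j < dim_col (?E * real_diag_mat (Suc m) (case_nat a l) * mat_adjoint ?E)"
  then have i: "i < Suc m" and j: "j < Suc m"
    using E by auto
  have "(?E * real_diag_mat (Suc m) (case_nat a l) * mat_adjoint ?E) $$ (i,j)
      = ?E $$ (i,0) * complex_of_real a * cnj (?E $$ (j,0))
        + (\<Sum>k<m. ?E $$ (i,Suc k) * complex_of_real (l k) * cnj (?E $$ (j,Suc k)))"
    unfolding index_unitary_similar[OF E i j] sum.lessThan_Suc_shift by simp
  also have "\<dots> = A $$ (i,j)"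
  proof (cases i; cases j)
    fix i' j'
    assume ij: "i = Suc i'" "j = Suc j'"
    then have "(\<Sum>k<m. ?E $$ (i,Suc k) * complex_of_real (l k) * cnj (?E $$ (j,Suc k)))
        = (U * real_diag_mat m l * mat_adjoint U) $$ (i',j')"
      using U i j by (simp add: index_unitary_similar[OF U] del: index_mult_mat)
    then show ?thesis
      using U i j ij by (simp flip: lower)
  qed (use U i j col0 hermitian_index[OF A _ j, of 0] in auto)
  finally show "A $$ (i,j) = (?E * real_diag_mat (Suc m) (case_nat a l) * mat_adjoint ?E) $$ (i,j)"
    by simp
qed (use A U in \<open>auto simp: hermitian_def\<close>)

theorem hermitian_spectral:
  assumes "hermitian n A"
  shows "\<exists>U l. unitary n U \<and> A = U * real_diag_mat n l * mat_adjoint U"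
  using assms
proof (induction n arbitrary: A)
  case 0
  then have "A = 1\<^sub>m 0 * real_diag_mat 0 l * mat_adjoint (1\<^sub>m 0)" for l
    by (intro eq_matI) (auto simp: hermitian_def)
  moreover have "unitary 0 (1\<^sub>m 0)"
    by (rule unitaryI) (auto intro!: eq_matI)
  ultimately show ?case
    by blast
next
  case (Suc m A)
  obtain W a where W: "unitary (Suc m) W" and A': "hermitian (Suc m) (mat_adjoint W * A * W)"
    and col0: "\<And>i. i < Suc m \<Longrightarrow>
      (mat_adjoint W * A * W) $$ (i,0) = (if i = 0 then complex_of_real a else 0)"
    using hermitian_deflation[OF Suc.prems] by blast
  obtain U l where U: "unitary m U"
    and lower: "mat m m (\<lambda>(i,j). (mat_adjoint W * A * W) $$ (Suc i, Suc j))
      = U * real_diag_mat m l * mat_adjoint U"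
    using Suc.IH[OF hermitian_lower_block[OF A']] by blast
  let ?U' = "W * one_direct_sum U" and ?l' = "case_nat a l"
  have "A = W * (mat_adjoint W * A * W) * mat_adjoint W"
    using unitary_conj_cancel[OF unitary_adjoint[OF W]] Suc.prems unfolding hermitian_def by simp
  also have "\<dots> = W * (one_direct_sum U * real_diag_mat (Suc m) ?l' * mat_adjoint (one_direct_sum U))
      * mat_adjoint W"
    using one_direct_sum_similar[OF unitaryD(1)[OF U] A' col0 lower] by simp
  also have "\<dots> = ?U' * real_diag_mat (Suc m) ?l' * mat_adjoint ?U'"
    using unitaryD(1)[OF W] unitaryD(1)[OF U]
    by (simp add: mat_adjoint_mult[of W _ "Suc m" _ "Suc m"] assoc_mult_mat')
  finally show ?case
    using unitary_mult[OF W unitary_one_direct_sum[OF U]] by blast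
qed

section \<open>The trace norm\<close>

lemma order_prod_linear_factors:
  fixes as :: "complex list"
  shows "order z (\<Prod>a\<leftarrow>as. [:-a,1:]) = count_list as z"
proof (induction as)
  case Nil
  then show ?case
    by (simp add: order_0I)
next
  case (Cons a as)
  have nz: "[:-a,1:] * (\<Prod>a\<leftarrow>as. [:-a,1:]) \<noteq> 0"
    by (simp only: prod_list.Cons[symmetric] prod_list_zero_iff) auto
  have "order z (\<Prod>a\<leftarrow>a#as. [:-a,1:]) = order z [:-a,1:] + order z (\<Prod>a\<leftarrow>as. [:-a,1:])"
    using order_mult[OF nz] by simp
  also have "\<dots> = (if a = z then 1 else 0) + count_list as z"
    using Cons by (simp add: order_linear')
  finally show ?case
    by simp
qed

lemma sum_count_list:
  fixes f :: "'a \<Rightarrow> real"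
  shows "(\<Sum>x\<in>set as. real (count_list as x) * f x) = (\<Sum>a\<leftarrow>as. f a)"
proof (induction as)
  case (Cons a as)
  have "(\<Sum>x\<in>set (a#as). real (count_list (a#as) x) * f x)
      = (\<Sum>x\<in>set (a#as). real (count_list as x) * f x) + (\<Sum>x\<in>set (a#as). if x = a then f x else 0)"
    unfolding sum.distrib[symmetric] by (intro sum.cong) (auto simp: algebra_simps)
  also have "(\<Sum>x\<in>set (a#as). real (count_list as x) * f x) = (\<Sum>x\<in>set as. real (count_list as x) * f x)"
    by (rule sum.mono_neutral_right) (auto simp: count_list_0_iff)
  finally show ?case
    using Cons by (simp add: sum.delta)
qed simp

lemma sum_roots_prod_linear_factors:
  fixes as :: "complex list" and f :: "complex \<Rightarrow> real"
  defines "p \<equiv> \<Prod>a\<leftarrow>as. [:-a,1:]"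
  shows "(\<Sum>z\<in>{z. poly p z = 0}. real (order z p) * f z) = (\<Sum>a\<leftarrow>as. f a)"
proof -
  have "{z. poly p z = 0} = set as"
    unfolding p_def by (auto simp: poly_prod_list_zero_iff)
  then show ?thesis
    unfolding p_def by (simp add: order_prod_linear_factors sum_count_list)
qed

lemma mat_adjoint_unitary_similar:
  assumes U: "U \<in> carrier_mat n n"
  shows "mat_adjoint (U * real_diag_mat n l * mat_adjoint U) = U * real_diag_mat n l * mat_adjoint U"
proof -
  have "mat_adjoint (U * real_diag_mat n l * mat_adjoint U) = U * mat_adjoint (U * real_diag_mat n l)"
    using mat_adjoint_mult[of "U * real_diag_mat n l" n n "mat_adjoint U" n] U by simp
  then show ?thesis
    using U by (simp add: mat_adjoint_mult[of U n n _ n] assoc_mult_mat')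
qed

lemma trace_norm_unitary_similar:
  assumes U: "unitary n U"
  shows "trace_norm (U * real_diag_mat n l * mat_adjoint U) = (\<Sum>i<n. \<bar>l i\<bar>)"
proof -
  note U' = unitaryD[OF U]
  let ?A = "U * real_diag_mat n l * mat_adjoint U" and ?D2 = "real_diag_mat n (\<lambda>i. l i * l i)"
  have "mat_adjoint ?A * ?A = U * (real_diag_mat n l * (mat_adjoint U * (U * (real_diag_mat n l * mat_adjoint U))))"
    unfolding mat_adjoint_unitary_similar[OF U'(1)] using U' by (simp add: assoc_mult_mat')
  also have "\<dots> = U * (real_diag_mat n l * (real_diag_mat n l * mat_adjoint U))"
    using unitary_cancel_left[OF U mult_carrier_mat[OF real_diag_mat_carrier U'(2)]] by simp
  also have "\<dots> = U * (?D2 * mat_adjoint U)"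
    using U' by (simp add: real_diag_mat_mult
        flip: assoc_mult_mat[of "real_diag_mat n l" n n "real_diag_mat n l" n "mat_adjoint U" n])
  also have "\<dots> = U * ?D2 * mat_adjoint U"
    using U' by (simp add: assoc_mult_mat')
  finally have "similar_mat (mat_adjoint ?A * ?A) ?D2"
    using U' by (intro similar_matI[where n = n and P = U and Q = "mat_adjoint U"]) auto
  moreover have "diag_mat ?D2 = map (\<lambda>i. complex_of_real (l i * l i)) [0..<n]"
    unfolding diag_mat_def by simp
  ultimately have "char_poly (mat_adjoint ?A * ?A) = (\<Prod>a\<leftarrow>map (\<lambda>i. complex_of_real (l i * l i)) [0..<n]. [:-a,1:])"
    by (simp add: char_poly_similar char_poly_upper_triangular[of _ n] upper_triangular_def)
  then have "trace_norm ?A = (\<Sum>a\<leftarrow>map (\<lambda>i. complex_of_real (l i * l i)) [0..<n]. sqrt (Re a))"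
    unfolding trace_norm_def Let_def by (simp only: sum_roots_prod_linear_factors)
  also have "\<dots> = (\<Sum>i<n. \<bar>l i\<bar>)"
    by (simp add: o_def real_sqrt_mult_self interv_sum_list_conv_sum_set_nat atLeast0LessThan)
  finally show ?thesis .
qed

lemma trace_norm_nonneg:
  assumes "hermitian n X"
  shows "0 \<le> trace_norm X"
proof -
  obtain U l where "unitary n U" "X = U * real_diag_mat n l * mat_adjoint U"
    using hermitian_spectral[OF assms] by blast
  then show ?thesis
    by (simp add: trace_norm_unitary_similar sum_nonneg)
qed

lemma unitary_col_norm:
  assumes W: "unitary n W" and k: "k < n"
  shows "(\<Sum>j<n. (cmod (W $$ (j,k)))\<^sup>2) = 1"
proof -
  note W' = unitaryD[OF W]
  have "complex_of_real (\<Sum>j<n. (cmod (W $$ (j,k)))\<^sup>2) = (\<Sum>j<n. mat_adjoint W $$ (k,j) * W $$ (j,k))"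
    using W' k by (auto simp: complex_norm_square mult.commute simp del: of_real_power intro!: sum.cong)
  also have "\<dots> = (mat_adjoint W * W) $$ (k,k)"
    by (rule index_mult_mat_sum[symmetric]) (use W' k in auto)
  also have "\<dots> = 1"
    using W' k by simp
  finally show ?thesis
    by (simp only: of_real_eq_1_iff)
qed

lemma sum_cmod_diag_conj_le_trace_norm:
  assumes A: "hermitian n A" and V: "unitary n V"
  shows "(\<Sum>j<n. cmod ((mat_adjoint V * A * V) $$ (j,j))) \<le> trace_norm A"
proof -
  obtain U l where U: "unitary n U" and A_eq: "A = U * real_diag_mat n l * mat_adjoint U"
    using hermitian_spectral[OF A] by blast
  note U' = unitaryD[OF U] and V' = unitaryD[OF V]
  define W where "W = mat_adjoint V * U"
  have W: "unitary n W"
    unfolding W_def by (rule unitary_mult[OF unitary_adjoint[OF V] U])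
  have "mat_adjoint V * A * V = W * real_diag_mat n l * mat_adjoint W"
    unfolding A_eq W_def using U' V' by (simp add: mat_adjoint_mult[of _ n n U n] assoc_mult_mat')
  then have diag: "cmod ((mat_adjoint V * A * V) $$ (j,j)) \<le> (\<Sum>k<n. \<bar>l k\<bar> * (cmod (W $$ (j,k)))\<^sup>2)"
    if j: "j < n" for j
  proof -
    have "cmod ((mat_adjoint V * A * V) $$ (j,j))
        \<le> (\<Sum>k<n. cmod (W $$ (j,k) * complex_of_real (l k) * cnj (W $$ (j,k))))"
      unfolding \<open>_ = W * _ * _\<close> index_unitary_similar[OF unitaryD(1)[OF W] j j] by (rule norm_sum)
    then show ?thesis
      by (simp add: norm_mult power2_eq_square mult_ac)
  qed
  have "(\<Sum>j<n. cmod ((mat_adjoint V * A * V) $$ (j,j))) \<le> (\<Sum>j<n. \<Sum>k<n. \<bar>l k\<bar> * (cmod (W $$ (j,k)))\<^sup>2)"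
    by (rule sum_mono) (simp add: diag)
  also have "\<dots> = (\<Sum>k<n. \<bar>l k\<bar> * (\<Sum>j<n. (cmod (W $$ (j,k)))\<^sup>2))"
    by (subst sum.swap) (simp add: sum_distrib_left)
  also have "\<dots> = trace_norm A"
    by (simp add: unitary_col_norm[OF W] A_eq trace_norm_unitary_similar[OF U])
  finally show ?thesis .
qed

lemma trace_norm_triangle:
  assumes X: "hermitian n X" and Y: "hermitian n Y"
  shows "trace_norm (X + Y) \<le> trace_norm X + trace_norm Y"
proof -
  have XY: "X \<in> carrier_mat n n" "Y \<in> carrier_mat n n"
    using X Y unfolding hermitian_def by auto
  obtain V e where V: "unitary n V" and Z: "X + Y = V * real_diag_mat n e * mat_adjoint V"
    using hermitian_spectral[OF hermitian_add[OF X Y]] by blast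
  note V' = unitaryD[OF V]
  let ?X' = "mat_adjoint V * X * V" and ?Y' = "mat_adjoint V * Y * V"
  have "mat_adjoint V * (X + Y) * V = ?X' + ?Y'"
    using V' XY add_mult_distrib_mat[OF mult_carrier_mat[OF V'(2) XY(1)] mult_carrier_mat[OF V'(2) XY(2)] V'(1)]
    by (simp add: mult_add_distrib_mat[of _ n n])
  then have diag: "real_diag_mat n e = ?X' + ?Y'"
    by (simp add: Z unitary_conj_cancel[OF V])
  have e_le: "\<bar>e j\<bar> \<le> cmod (?X' $$ (j,j)) + cmod (?Y' $$ (j,j))" if j: "j < n" for j
  proof -
    have "complex_of_real (e j) = (?X' + ?Y') $$ (j,j)"
      using j by (simp flip: diag)
    also have "\<dots> = ?X' $$ (j,j) + ?Y' $$ (j,j)"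
      by (rule index_add_mat(1)) (use V' XY j in auto)
    finally have "cmod (complex_of_real (e j)) = cmod (?X' $$ (j,j) + ?Y' $$ (j,j))"
      by (rule arg_cong)
    then show ?thesis
      using norm_triangle_ineq[of "?X' $$ (j,j)" "?Y' $$ (j,j)"] by simp
  qed
  have "trace_norm (X + Y) = (\<Sum>j<n. \<bar>e j\<bar>)"
    by (simp add: Z trace_norm_unitary_similar[OF V])
  also have "\<dots> \<le> (\<Sum>j<n. cmod (?X' $$ (j,j)) + cmod (?Y' $$ (j,j)))"
    by (rule sum_mono) (simp add: e_le)
  also have "\<dots> = (\<Sum>j<n. cmod (?X' $$ (j,j))) + (\<Sum>j<n. cmod (?Y' $$ (j,j)))"
    by (rule sum.distrib)
  also have "\<dots> \<le> trace_norm X + trace_norm Y"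
    by (rule add_mono[OF sum_cmod_diag_conj_le_trace_norm[OF X V] sum_cmod_diag_conj_le_trace_norm[OF Y V]])
  finally show ?thesis .
qed

lemma trace_norm_smult_real:
  assumes X: "hermitian n X"
  shows "trace_norm (complex_of_real c \<cdot>\<^sub>m X) = \<bar>c\<bar> * trace_norm X"
proof -
  obtain U l where U: "unitary n U" and X_eq: "X = U * real_diag_mat n l * mat_adjoint U"
    using hermitian_spectral[OF X] by blast
  note U' = unitaryD[OF U]
  have "complex_of_real c \<cdot>\<^sub>m real_diag_mat n l = real_diag_mat n (\<lambda>i. c * l i)"
    by (rule eq_matI) auto
  then have "complex_of_real c \<cdot>\<^sub>m X = U * real_diag_mat n (\<lambda>i. c * l i) * mat_adjoint U"
    using U' unfolding X_eq
    by (simp add: mult_smult_distrib[of U n n _ n] mult_smult_assoc_mat[of _ n n _ n] flip: \<open>_ = real_diag_mat n _\<close>)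
  then show ?thesis
    by (simp add: X_eq trace_norm_unitary_similar[OF U] abs_mult sum_distrib_left)
qed

section \<open>Density operators and the trace distance\<close>

lemma quadratic_form_two_coords:
  fixes A :: "complex mat" and x y :: complex
  assumes A: "A \<in> carrier_mat n n" and i: "i < n" and j: "j < n"
  defines "w \<equiv> vec n (\<lambda>k. (if k = i then x else 0) + (if k = j then y else 0))"
  shows "conjugate w \<bullet> (A *\<^sub>v w)
    = cnj x * (A $$ (i,i) * x + A $$ (i,j) * y) + cnj y * (A $$ (j,i) * x + A $$ (j,j) * y)"
proof -
  have Aw: "(A *\<^sub>v w) $ a = A $$ (a,i) * x + A $$ (a,j) * y" if a: "a < n" for a
  proof -
    have "(A *\<^sub>v w) $ a = (\<Sum>b<n. A $$ (a,b) * (if b = i then x else 0))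
        + (\<Sum>b<n. A $$ (a,b) * (if b = j then y else 0))"
      using A a unfolding w_def by (simp add: scalar_prod_def atLeast0LessThan distrib_left sum.distrib)
    then show ?thesis
      using i j by (simp add: sum_mult_delta)
  qed
  have "conjugate w \<bullet> (A *\<^sub>v w)
      = (\<Sum>a<n. (if a = i then cnj x else 0) * (A *\<^sub>v w) $ a) + (\<Sum>a<n. (if a = j then cnj y else 0) * (A *\<^sub>v w) $ a)"
    using A unfolding w_def sum.distrib[symmetric]
    by (auto simp: scalar_prod_def atLeast0LessThan distrib_right if_distrib[of cnj] cong: if_cong intro!: sum.cong)
  then show ?thesis
    using i j by (simp add: sum_delta_mult Aw)
qed

lemma psd_hermitian:
  assumes "psd_mat n A"
  shows "hermitian n A"
proof -
  have A: "A \<in> carrier_mat n n" and real: "\<And>v. v \<in> carrier_vec n \<Longrightarrow> Im (conjugate v \<bullet> (A *\<^sub>v v)) = 0"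
    using assms unfolding psd_mat_def by auto
  have Im_form: "Im (cnj x * (A $$ (i,i) * x + A $$ (i,j) * y) + cnj y * (A $$ (j,i) * x + A $$ (j,j) * y)) = 0"
    if "i < n" "j < n" for i j x y
    using real[of "vec n (\<lambda>k. (if k = i then x else 0) + (if k = j then y else 0))"]
    by (simp add: quadratic_form_two_coords[OF A that])
  have diag: "Im (A $$ (i,i)) = 0" if i: "i < n" for i
    using Im_form[OF i i, of 1 0] by simp
  have herm: "A $$ (i,j) = cnj (A $$ (j,i))" if i: "i < n" and j: "j < n" for i j
  proof -
    have "Im (A $$ (i,j)) + Im (A $$ (j,i)) = 0"
      using Im_form[OF i j, of 1 1] diag[OF i] diag[OF j] by simp
    moreover have "Re (A $$ (i,j)) - Re (A $$ (j,i)) = 0"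
      using Im_form[OF i j, of 1 \<i>] diag[OF i] diag[OF j] by (simp add: algebra_simps)
    ultimately show ?thesis
      by (simp add: complex_eq_iff)
  qed
  have "mat_adjoint A = A"
  proof (rule eq_matI)
    fix i j
    assume "i < dim_row A" "j < dim_col A"
    then show "mat_adjoint A $$ (i,j) = A $$ (i,j)"
      using A herm[of j i] by simp
  qed (use A in auto)
  then show ?thesis
    using A unfolding hermitian_def by simp
qed

lemma density_ops_hermitian: "\<rho> \<in> density_ops n \<Longrightarrow> hermitian n \<rho>"
  unfolding density_ops_def by (simp add: psd_hermitian)

lemma mtrace_mult_comm:
  fixes A B :: "complex mat"
  assumes A: "A \<in> carrier_mat n m" and B: "B \<in> carrier_mat m n"
  shows "mtrace (A * B) = mtrace (B * A)"
proof -
  have expand: "mtrace (X * Y) = (\<Sum>i<k. \<Sum>l<j. X $$ (i,l) * Y $$ (l,i))"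
    if "X \<in> carrier_mat k j" "Y \<in> carrier_mat j k" for X Y :: "complex mat" and k j
    unfolding mtrace_def using that
    by (auto simp: index_mult_mat_sum[OF that] simp del: index_mult_mat(1) intro!: sum.cong)
  show ?thesis
    unfolding expand[OF A B] expand[OF B A] by (subst sum.swap) (simp add: mult.commute)
qed

lemma quadratic_form_col_unitary_conj:
  fixes A U :: "complex mat"
  assumes U: "U \<in> carrier_mat n n" and A: "A \<in> carrier_mat n n" and k: "k < n"
  shows "(mat_adjoint U * A * U) $$ (k,k) = conjugate (col U k) \<bullet> (A *\<^sub>v col U k)"
  using U A k by (simp add: assoc_mult_mat' row_mat_adjoint mult_mat_vec_def)

lemma density_ops_trace_norm:
  assumes \<tau>: "\<tau> \<in> density_ops n"
  shows "trace_norm \<tau> = 1"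
proof -
  have A: "\<tau> \<in> carrier_mat n n" and psd: "psd_mat n \<tau>" and tr: "mtrace \<tau> = 1"
    using \<tau> unfolding density_ops_def psd_mat_def by auto
  obtain U l where U: "unitary n U" and \<tau>_eq: "\<tau> = U * real_diag_mat n l * mat_adjoint U"
    using hermitian_spectral[OF density_ops_hermitian[OF \<tau>]] by blast
  note U' = unitaryD[OF U]
  have D: "mat_adjoint U * \<tau> * U = real_diag_mat n l"
    unfolding \<tau>_eq by (rule unitary_conj_cancel[OF U real_diag_mat_carrier])
  have "0 \<le> l k" if k: "k < n" for k
  proof -
    have "complex_of_real (l k) = conjugate (col U k) \<bullet> (\<tau> *\<^sub>v col U k)"
      using quadratic_form_col_unitary_conj[OF U'(1) A k] k by (simp add: D)
    then show ?thesis
      using psd U'(1) k unfolding psd_mat_def by (metis Re_complex_of_real col_carrier_vec carrier_matD(1))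
  qed
  then have "trace_norm \<tau> = (\<Sum>k<n. l k)"
    by (simp add: \<tau>_eq trace_norm_unitary_similar[OF U])
  also have "complex_of_real \<dots> = mtrace (mat_adjoint U * \<tau> * U)"
    unfolding D mtrace_def by simp
  also have "\<dots> = mtrace (\<tau> * (U * mat_adjoint U))"
    using U' A by (simp add: mtrace_mult_comm[of "mat_adjoint U" n n "\<tau> * U"] assoc_mult_mat')
  also have "\<dots> = 1"
    using U' A tr by simp
  finally show ?thesis
    by (simp only: of_real_eq_1_iff)
qed

lemma tdist_nonneg: "hermitian n X \<Longrightarrow> hermitian n Y \<Longrightarrow> 0 \<le> tdist X Y"
  unfolding tdist_def by (simp add: trace_norm_nonneg[OF hermitian_diff])

lemma tdist_commute:
  assumes X: "hermitian n X" and Y: "hermitian n Y"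
  shows "tdist X Y = tdist Y X"
proof -
  have "Y - X = complex_of_real (-1) \<cdot>\<^sub>m (X - Y)"
    by (rule eq_matI) (use X Y in \<open>auto simp: hermitian_def\<close>)
  then show ?thesis
    unfolding tdist_def using trace_norm_smult_real[OF hermitian_diff[OF X Y], of "-1"] by simp
qed

lemma tdist_triangle:
  assumes X: "hermitian n X" and Y: "hermitian n Y" and Z: "hermitian n Z"
  shows "tdist X Z \<le> tdist X Y + tdist Y Z"
proof -
  have "X - Z = (X - Y) + (Y - Z)"
    by (rule eq_matI) (use X Y Z in \<open>auto simp: hermitian_def\<close>)
  then show ?thesis
    unfolding tdist_def using trace_norm_triangle[OF hermitian_diff[OF X Y] hermitian_diff[OF Y Z]] by simp
qed

lemma tdist_density_ops_le_one:
  assumes \<rho>: "\<rho> \<in> density_ops n" and \<tau>: "\<tau> \<in> density_ops n"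
  shows "tdist \<rho> \<tau> \<le> 1"
proof -
  have zero: "hermitian n (0\<^sub>m n n)"
    unfolding hermitian_def by (auto intro!: eq_matI)
  have half: "tdist \<sigma> (0\<^sub>m n n) = 1 / 2" if \<sigma>: "\<sigma> \<in> density_ops n" for \<sigma>
  proof -
    have "\<sigma> - 0\<^sub>m n n = \<sigma>"
      using density_ops_hermitian[OF \<sigma>] by (intro eq_matI) (auto simp: hermitian_def)
    then show ?thesis
      unfolding tdist_def by (simp add: density_ops_trace_norm[OF \<sigma>])
  qed
  have "tdist \<rho> \<tau> \<le> tdist \<rho> (0\<^sub>m n n) + tdist (0\<^sub>m n n) \<tau>"
    by (rule tdist_triangle[OF density_ops_hermitian[OF \<rho>] zero density_ops_hermitian[OF \<tau>]])
  also have "\<dots> = 1"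
    using half[OF \<rho>] half[OF \<tau>] tdist_commute[OF zero density_ops_hermitian[OF \<tau>]] by simp
  finally show ?thesis .
qed

lemma tdist_sets_le:
  assumes "\<P> \<subseteq> density_ops n" "\<E> \<subseteq> density_ops n" "\<rho> \<in> \<P>" "\<tau> \<in> \<E>"
  shows "tdist_sets \<P> \<E> \<le> tdist \<rho> \<tau>"
  unfolding tdist_sets_def
proof (rule cInf_lower)
  show "bdd_below {tdist \<rho> \<tau> |\<rho> \<tau>. \<rho> \<in> \<P> \<and> \<tau> \<in> \<E>}"
    using assms(1,2) by (auto intro!: bdd_belowI[of _ 0] tdist_nonneg density_ops_hermitian)
qed (use assms(3,4) in blast)

lemma tdist_le_diam:
  assumes "\<E> \<subseteq> density_ops n" "\<tau> \<in> \<E>" "\<tau>' \<in> \<E>"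
  shows "tdist \<tau> \<tau>' \<le> diam \<E>"
  unfolding diam_def
proof (rule cSup_upper)
  show "bdd_above {tdist \<tau> \<tau>' |\<tau> \<tau>'. \<tau> \<in> \<E> \<and> \<tau>' \<in> \<E>}"
    using assms(1) by (auto intro!: bdd_aboveI[of _ 1] tdist_density_ops_le_one)
qed (use assms(2,3) in blast)

section \<open>Work cost from a dirty battery\<close>

lemma mtrace_ket1_proj: "mtrace ket1_proj = 1"
  unfolding mtrace_def ket1_proj_def by (simp add: eval_nat_numeral)

lemma mtrace_batt_pi: "mtrace (batt_pi M) = 1"
  unfolding mtrace_def batt_pi_def by (simp add: eval_nat_numeral)

lemma ket1_proj_eq_batt_pi:
  assumes "M \<noteq> 0"
  shows "ket1_proj = complex_of_real (1 + M) \<cdot>\<^sub>m batt_pi M + complex_of_real (- M) \<cdot>\<^sub>m batt_pi (M * M)"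
proof -
  have "complex_of_real M \<noteq> 0"
    using assms by simp
  then show ?thesis
    by (intro eq_matI) (auto simp: ket1_proj_def batt_pi_def less_2_cases_iff field_simps)
qed

lemma GPL_ket1_proj:
  assumes F: "F \<in> GPL d" and M: "M \<noteq> 0"
  shows "F ket1_proj = complex_of_real (1 + M) \<cdot>\<^sub>m F (batt_pi M) + complex_of_real (- M) \<cdot>\<^sub>m F (batt_pi (M * M))"
proof -
  have batt: "batt_pi M' \<in> carrier_mat 2 2" for M'
    unfolding batt_pi_def by simp
  show ?thesis
    using F batt unfolding ket1_proj_eq_batt_pi[OF M] GPL_def by simp
qed

lemma one_smult_mat [simp]: "(1::'a::monoid_mult) \<cdot>\<^sub>m A = A"
  by (rule eq_matI) auto

lemma feasible_replacer:
  assumes "\<tau> \<in> \<E>" "\<rho> \<in> \<P>" "tdist \<tau> \<rho> \<le> \<epsilon>"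
  shows "feasible (replacer \<tau>) \<epsilon> \<P> \<E> M"
  using assms unfolding feasible_def replacer_def batt_Pi_def
  by (auto simp: mtrace_ket1_proj mtrace_batt_pi)

lemma feasible_GPL_bound:
  assumes P: "\<P> \<subseteq> density_ops d" and E: "\<E> \<subseteq> density_ops d" and M: "1 < M"
    and F: "F \<in> GPL d" and feas: "feasible F \<epsilon> \<P> \<E> M"
  shows "tdist_sets \<P> \<E> \<le> \<epsilon> + M * diam \<E>"
proof -
  obtain \<rho> where \<rho>: "\<rho> \<in> \<P>" and F1\<rho>: "tdist (F ket1_proj) \<rho> \<le> \<epsilon>"
    using feas unfolding feasible_def by blast
  define \<tau>1 \<tau>2 where "\<tau>1 = F (batt_pi M)" and "\<tau>2 = F (batt_pi (M * M))"
  have "F (batt_pi M') \<in> \<E>" if "M \<le> M'" for M'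
    using feas that unfolding feasible_def batt_Pi_def by blast
  then have \<tau>: "\<tau>1 \<in> \<E>" "\<tau>2 \<in> \<E>"
    using M unfolding \<tau>1_def \<tau>2_def by simp_all
  have herm: "hermitian d \<rho>" "hermitian d \<tau>1" "hermitian d \<tau>2"
    using \<rho> \<tau> P E density_ops_hermitian by auto
  have F1: "F ket1_proj = complex_of_real (1 + M) \<cdot>\<^sub>m \<tau>1 + complex_of_real (- M) \<cdot>\<^sub>m \<tau>2"
    unfolding \<tau>1_def \<tau>2_def using GPL_ket1_proj[OF F] M by simp
  have herm_F1: "hermitian d (F ket1_proj)"
    unfolding F1 by (intro hermitian_add hermitian_smult_real herm)
  have "F ket1_proj - \<tau>1 = complex_of_real M \<cdot>\<^sub>m (\<tau>1 - \<tau>2)"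
    unfolding F1 by (rule eq_matI) (use herm in \<open>auto simp: hermitian_def algebra_simps\<close>)
  then have scaled: "tdist (F ket1_proj) \<tau>1 = M * tdist \<tau>1 \<tau>2"
    unfolding tdist_def using trace_norm_smult_real[OF hermitian_diff[OF herm(2,3)], of M] M by simp
  have "tdist_sets \<P> \<E> \<le> tdist \<rho> \<tau>1"
    by (rule tdist_sets_le[OF P E \<rho> \<tau>(1)])
  also have "\<dots> \<le> tdist \<rho> (F ket1_proj) + tdist (F ket1_proj) \<tau>1"
    by (rule tdist_triangle[OF herm(1) herm_F1 herm(2)])
  also have "\<dots> = tdist (F ket1_proj) \<rho> + M * tdist \<tau>1 \<tau>2"
    by (simp add: scaled tdist_commute[OF herm(1) herm_F1])
  also have "\<dots> \<le> \<epsilon> + M * diam \<E>"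
    using F1\<rho> tdist_le_diam[OF E \<tau>] M by (intro add_mono mult_left_mono) auto
  finally show ?thesis .
qed

lemma work_cost_eq_zero:
  assumes "F \<in> \<FF>" "\<forall>M > 1. feasible F \<epsilon> \<P> \<E> M"
  shows "work_cost \<FF> \<epsilon> \<P> \<E> = 0"
proof -
  have "{M. M > 1 \<and> (\<exists>F \<in> \<FF>. feasible F \<epsilon> \<P> \<E> M)} = {1<..}"
    using assms by auto
  then show ?thesis
    unfolding work_cost_def by simp
qed

lemma work_cost_ge_ln:
  assumes q: "0 < q"
    and feasible_ge: "\<And>M F. 1 < M \<Longrightarrow> F \<in> \<FF> \<Longrightarrow> feasible F \<epsilon> \<P> \<E> M \<Longrightarrow> q \<le> M"
  shows "ereal (ln q) \<le> work_cost \<FF> \<epsilon> \<P> \<E>"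
proof (cases "{M. M > 1 \<and> (\<exists>F \<in> \<FF>. feasible F \<epsilon> \<P> \<E> M)} = {}")
  case False
  then have "q \<le> Inf {M. M > 1 \<and> (\<exists>F \<in> \<FF>. feasible F \<epsilon> \<P> \<E> M)}"
    using feasible_ge by (intro cInf_greatest) auto
  then show ?thesis
    using False q unfolding work_cost_def by simp
qed (simp add: work_cost_def)

theorem propositionS3:
  fixes d :: nat and \<epsilon> :: real and \<P> \<E> :: "complex mat set"
    and TO :: "(complex mat \<Rightarrow> complex mat) set"
  assumes "0 \<le> \<epsilon>" and "\<epsilon> < 1"
    and "\<P> \<subseteq> density_ops d" and "\<E> \<subseteq> density_ops d"
    and TO_replacer: "\<forall>\<tau> \<in> density_ops d. replacer \<tau> \<in> TO"
  shows "(eps_ball d \<epsilon> \<P> \<inter> \<E> \<noteq> {} \<longrightarrow>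
            work_cost TO \<epsilon> \<P> \<E> = 0 \<and>
            (\<exists>\<tau> \<in> \<E>. \<forall>M > 1. feasible (replacer \<tau>) \<epsilon> \<P> \<E> M))
       \<and> (tdist_sets \<P> \<E> > \<epsilon> \<longrightarrow>
            work_cost (GPL d) \<epsilon> \<P> \<E> \<ge>
              (if diam \<E> = 0 then \<infinity> else ereal (ln ((tdist_sets \<P> \<E> - \<epsilon>) / diam \<E>))))"
proof (intro conjI impI)
  assume "eps_ball d \<epsilon> \<P> \<inter> \<E> \<noteq> {}"
  then obtain \<tau> \<rho> where \<tau>: "\<tau> \<in> \<E>" "\<tau> \<in> density_ops d" and "\<rho> \<in> \<P>" "tdist \<tau> \<rho> \<le> \<epsilon>"
    unfolding eps_ball_def by blast
  then have feasible: "\<forall>M > 1. feasible (replacer \<tau>) \<epsilon> \<P> \<E> M"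
    by (blast intro: feasible_replacer)
  show "work_cost TO \<epsilon> \<P> \<E> = 0"
    using work_cost_eq_zero TO_replacer \<tau>(2) feasible by blast
  show "\<exists>\<tau> \<in> \<E>. \<forall>M > 1. feasible (replacer \<tau>) \<epsilon> \<P> \<E> M"
    using \<tau>(1) feasible by blast
next
  assume T: "tdist_sets \<P> \<E> > \<epsilon>"
  have bound: "tdist_sets \<P> \<E> - \<epsilon> \<le> M * diam \<E>"
    if "1 < M" "F \<in> GPL d" "feasible F \<epsilon> \<P> \<E> M" for M F
    using feasible_GPL_bound[OF assms(3,4) that] by simp
  show "work_cost (GPL d) \<epsilon> \<P> \<E> \<ge>
      (if diam \<E> = 0 then \<infinity> else ereal (ln ((tdist_sets \<P> \<E> - \<epsilon>) / diam \<E>)))"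
  proof (cases "\<exists>M F. 1 < M \<and> F \<in> GPL d \<and> feasible F \<epsilon> \<P> \<E> M")
    case True
    then have "0 < diam \<E>"
      using bound T by (smt (verit) zero_less_mult_iff)
    then have "ereal (ln ((tdist_sets \<P> \<E> - \<epsilon>) / diam \<E>)) \<le> work_cost (GPL d) \<epsilon> \<P> \<E>"
      using T bound by (intro work_cost_ge_ln) (auto simp: pos_divide_le_eq)
    then show ?thesis
      using \<open>0 < diam \<E>\<close> by simp
  qed (simp add: work_cost_def)
qed

end
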